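(* Let $\beta\in\mathbb{R}^p$ be fixed. Assume the following: - $(X^TDX)^{-1}$ exists with probability $1$; - $v^g_l<\infty$; - there is a constant $\delta>0$, not depending on $x$, such that $\mathbb{E}[g'(x^T\beta)\mid xx^T]=\delta$. Then $v^g_l>v^g_u$.
   Context: Let $p<n$. The labeled data $(x_1,y_1),\dots,(x_n,y_n)$ are i.i.d. copies of $(x,y)\in\mathbb{R}^p\times\mathbb{R}$. Write $X\in\mathbb{R}^{n\times p}$ for the matrix with rows $x_i^T$. The marginal distribution $P_x$ satisfies $\mathbb{E}[x]=0$. The model is a generalized linear model: $\mathbb{E}[y\mid x]=g(x^T\beta)$ for a known, monotonically increasing, differentiable link function $g$, and $\mathrm{Var}(y\mid x)=\sigma^2$. Notation: - $D$ is the $n\times n$ diagonal matrix with $D_{ii}=g'(x_i^T\beta)$. - $H_g=\mathbb{E}_X[X^TDX]$. - $v^g_l=\mathrm{tr}\big(\mathbb{E}_X[(X^TDX)^{-1}X^TX(X^TDX)^{-1}]H_g\big)$. - $v^g_u=\frac{n-1}{n}\mathrm{tr}\big(H_g^{-1}\mathbb{E}_X[X^TX]\big)$. *)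

theory Defs
  imports "HOL-Probability.Probability"
begin

definition outer_prod :: "real^'p::finite \<Rightarrow> real^'p^'p" where
  "outer_prod v = (\<chi> i j. v $ i * v $ j)"

definition design_matrix :: "('n::finite \<Rightarrow> 'a \<Rightarrow> real^'p) \<Rightarrow> 'a \<Rightarrow> real^'p^'n" where
  "design_matrix xs \<omega> = (\<chi> i. xs i \<omega>)"

definition weight_matrix :: "(real \<Rightarrow> real) \<Rightarrow> real^'p \<Rightarrow> real^'p^'n \<Rightarrow> real^'n^'n" where
  "weight_matrix g \<beta> X = (\<chi> i j. if i = j then deriv g (X $ i \<bullet> \<beta>) else 0)"

definition H_g :: "'a measure \<Rightarrow> (real \<Rightarrow> real) \<Rightarrow> real^'p \<Rightarrow> ('n::finite \<Rightarrow> 'a \<Rightarrow> real^'p) \<Rightarrow> real^'p^'p" where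
  "H_g M g \<beta> xs = integral\<^sup>L M (\<lambda>\<omega>. let X = design_matrix xs \<omega> in
      transpose X ** weight_matrix g \<beta> X ** X)"

definition v_l :: "'a measure \<Rightarrow> (real \<Rightarrow> real) \<Rightarrow> real^'p \<Rightarrow> ('n::finite \<Rightarrow> 'a \<Rightarrow> real^'p) \<Rightarrow> real" where
  "v_l M g \<beta> xs = trace (integral\<^sup>L M (\<lambda>\<omega>. let X = design_matrix xs \<omega>;
        A = transpose X ** weight_matrix g \<beta> X ** X in
      matrix_inv A ** (transpose X ** X) ** matrix_inv A) ** H_g M g \<beta> xs)"

definition v_u :: "'a measure \<Rightarrow> (real \<Rightarrow> real) \<Rightarrow> real^'p \<Rightarrow> ('n::finite \<Rightarrow> 'a \<Rightarrow> real^'p) \<Rightarrow> real" where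
  "v_u M g \<beta> xs = (real CARD('n) - 1) / real CARD('n) *
      trace (matrix_inv (H_g M g \<beta> xs) **
        integral\<^sup>L M (\<lambda>\<omega>. let X = design_matrix xs \<omega> in transpose X ** X))"

end

theory Submission
  imports Defs
begin

(*
  Write A = X^T D X, B = X^T X and S = E[B]. The conditional-expectation hypothesis gives
  H_g = E[A] = \<delta> S, so that v_u = (n - 1)/n * p/\<delta> and v_l = \<delta> E[tr(A^-1 B A^-1 S)].

  As S is a mean of Gram matrices, tr(Z P Z S) \<ge> 0 whenever Z is symmetric and P positive
  semidefinite. Expanding this for Z = A^-1 - c B^-1 and P = B, P = A gives, pointwise,
    3 c^2 tr(B^-1 S) \<le> tr(A^-1 B A^-1 S) + 2 c^3 tr(B^-1 A B^-1 S).
  The last trace is \<Sum>_i g'(x_i^T \<beta>) x_i^T B^-1 S B^-1 x_i, and B depends on the sample only through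
  the x_j x_j^T; by independence and E[g'(x^T \<beta>) | x x^T] = \<delta> its expectation is \<delta> E[tr(B^-1 S)].
  Taking c = 1/\<delta>, and truncating on {tr(B^-1 S) \<le> K} to keep all expectations finite, yields
  E[tr(B^-1 S)] \<le> \<delta>^2 E[tr(A^-1 B A^-1 S)]. The same expansion with Z = B^-1 - S^-1 and P = B gives
  tr(B^-1 S) + tr(S^-1 B) \<ge> 2p, hence E[tr(B^-1 S)] \<ge> p. Altogether v_l \<ge> p/\<delta> > v_u.
*)

section \<open>Positive semidefinite matrices and two trace inequalities\<close>

definition psd_matrix :: "real^'n::finite^'n \<Rightarrow> bool" where
  "psd_matrix W \<longleftrightarrow> (\<forall>v. 0 \<le> v \<bullet> (W *v v))"

lemma matrix_diff_ldistrib: "(A::real^'n::finite^'m) ** (B - C) = A ** B - A ** C"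
  by (simp add: matrix_matrix_mult_def vec_eq_iff sum_subtractf algebra_simps)

lemma matrix_diff_rdistrib: "((A::real^'n::finite^'m) - B) ** C = A ** C - B ** C"
  by (simp add: matrix_matrix_mult_def vec_eq_iff sum_subtractf algebra_simps)

lemma matrix_add_rdistrib: "((A::real^'n::finite^'m) + B) ** C = A ** C + B ** C"
  by (simp add: matrix_matrix_mult_def vec_eq_iff sum.distrib algebra_simps)

lemma matrix_scaleR_left: "(c *\<^sub>R (A::real^'n::finite^'m)) ** B = c *\<^sub>R (A ** B)"
  by (simp add: scalar_matrix_assoc)

lemma matrix_scaleR_right: "(A::real^'n::finite^'m) ** (c *\<^sub>R B) = c *\<^sub>R (A ** B)"
  by (simp add: matrix_scalar_ac scalar_matrix_assoc)

lemma trace_scaleR: "trace (c *\<^sub>R (A::real^'n::finite^'n)) = c * trace A"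
  by (simp add: trace_def sum_distrib_left)

lemma bounded_linear_trace_mult_left: "bounded_linear (\<lambda>Z::real^'n::finite^'n. trace (W ** Z))"
  unfolding linear_conv_bounded_linear[symmetric]
  by (rule linearI) (simp_all add: matrix_add_ldistrib matrix_scaleR_right trace_add trace_scaleR)

lemma bounded_linear_trace_mult_right: "bounded_linear (\<lambda>Z::real^'n::finite^'n. trace (Z ** W))"
  unfolding linear_conv_bounded_linear[symmetric]
  by (rule linearI) (simp_all add: matrix_add_rdistrib matrix_scaleR_left trace_add trace_scaleR)

lemma bounded_linear_transpose: "bounded_linear (transpose :: real^'n::finite^'m::finite \<Rightarrow> _)"
  unfolding linear_conv_bounded_linear[symmetric]
  by (rule linearI) (simp_all add: transpose_def vec_eq_iff)

lemma transpose_diff_scaleR: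
  "transpose ((a::real^'n::finite^'m::finite) - c *\<^sub>R b) = transpose a - c *\<^sub>R transpose b"
  by (simp add: transpose_def vec_eq_iff)

lemma matrix_inv_left: "invertible (A::real^'n::finite^'n) \<Longrightarrow> matrix_inv A ** A = mat 1"
  and matrix_inv_right: "invertible (A::real^'n::finite^'n) \<Longrightarrow> A ** matrix_inv A = mat 1"
  unfolding invertible_def matrix_inv_def by (metis (mono_tags, lifting) someI_ex)+

lemma matrix_inv_unique:
  assumes "invertible (A::real^'n::finite^'n)" "B ** A = mat 1"
  shows "matrix_inv A = B"
  by (metis assms matrix_inv_right matrix_mul_assoc matrix_mul_lid matrix_mul_rid)

lemma transpose_matrix_inv_symmetric:
  assumes "invertible (A::real^'n::finite^'n)" "transpose A = A"
  shows "transpose (matrix_inv A) = matrix_inv A"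
proof -
  have "transpose (matrix_inv A) ** A = mat 1"
    by (metis assms matrix_inv_right matrix_transpose_mul transpose_mat)
  then show ?thesis using matrix_inv_unique[OF assms(1)] by metis
qed

lemma matrix_inv_scaleR:
  assumes "invertible (A::real^'n::finite^'n)" "c \<noteq> 0"
  shows "matrix_inv (c *\<^sub>R A) = inverse c *\<^sub>R matrix_inv A"
  using assms by (intro matrix_inv_unique scalar_invertible)
    (simp_all add: matrix_scaleR_left matrix_scaleR_right matrix_inv_left)

lemma psd_matrix_congruence:
  assumes "transpose Z = Z" "psd_matrix P"
  shows "psd_matrix (Z ** P ** (Z::real^'n::finite^'n))"
  unfolding psd_matrix_def
proof
  fix v
  have "v \<bullet> ((Z ** P ** Z) *v v) = (Z *v v) \<bullet> (P *v (Z *v v))"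
    by (metis assms(1) dot_lmul_matrix matrix_vector_mul_assoc vector_transpose_matrix)
  then show "0 \<le> v \<bullet> ((Z ** P ** Z) *v v)"
    using assms(2) unfolding psd_matrix_def by simp
qed

lemma trace_congruence_diff_expand:
  fixes a b P S :: "real^'n::finite^'n"
  shows "trace ((a - c *\<^sub>R b) ** P ** (a - c *\<^sub>R b) ** S) =
    trace (a ** P ** a ** S) - c * trace (a ** P ** b ** S) - c * trace (b ** P ** a ** S)
      + c\<^sup>2 * trace (b ** P ** b ** S)"
  by (simp add: matrix_diff_ldistrib matrix_diff_rdistrib matrix_scaleR_left matrix_scaleR_right
      matrix_add_rdistrib trace_add trace_sub trace_scaleR power2_eq_square algebra_simps)

lemma trace_matrix_inv_tangent_bound:
  fixes A B S :: "real^'n::finite^'n"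
  assumes S: "\<And>W. psd_matrix W \<Longrightarrow> 0 \<le> trace (W ** S)"
    and A: "invertible A" "transpose A = A" "psd_matrix A"
    and B: "invertible B" "transpose B = B" "psd_matrix B"
    and "c > 0"
  shows "3 * c\<^sup>2 * trace (matrix_inv B ** S) \<le>
    trace (matrix_inv A ** B ** matrix_inv A ** S) + 2 * c ^ 3 * trace (matrix_inv B ** A ** matrix_inv B ** S)"
proof -
  define a b where "a = matrix_inv A" and "b = matrix_inv B"
  have "transpose (a - c *\<^sub>R b) = a - c *\<^sub>R b"
    unfolding a_def b_def using A B
    by (simp add: transpose_diff_scaleR transpose_matrix_inv_symmetric)
  then have B_term: "0 \<le> trace ((a - c *\<^sub>R b) ** B ** (a - c *\<^sub>R b) ** S)"
    and A_term: "0 \<le> trace ((a - c *\<^sub>R b) ** A ** (a - c *\<^sub>R b) ** S)"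
    using S psd_matrix_congruence A(3) B(3) by blast+
  have "a ** B ** b = a" "b ** B ** a = a" "b ** B ** b = b"
    "a ** A ** a = a" "a ** A ** b = b" "b ** A ** a = b"
    unfolding a_def b_def using A(1) B(1)
    by (metis matrix_inv_left matrix_inv_right matrix_mul_assoc matrix_mul_lid matrix_mul_rid)+
  then have "0 \<le> trace (a ** B ** a ** S) - 2 * c * trace (a ** S) + c\<^sup>2 * trace (b ** S)"
    and "0 \<le> 2 * c * (trace (a ** S) - 2 * c * trace (b ** S) + c\<^sup>2 * trace (b ** A ** b ** S))"
    using B_term A_term \<open>c > 0\<close> unfolding trace_congruence_diff_expand by simp_all
  then show ?thesis
    unfolding a_def b_def by (simp add: algebra_simps power2_eq_square power3_eq_cube)
qed

lemma trace_matrix_inv_add_trace_ge: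
  fixes B S :: "real^'n::finite^'n"
  assumes S: "\<And>W. psd_matrix W \<Longrightarrow> 0 \<le> trace (W ** S)" "invertible S" "transpose S = S"
    and B: "invertible B" "transpose B = B" "psd_matrix B"
  shows "2 * real CARD('n) \<le> trace (matrix_inv B ** S) + trace (matrix_inv S ** B)"
proof -
  define b s where "b = matrix_inv B" and "s = matrix_inv S"
  have "transpose (b - 1 *\<^sub>R s) = b - 1 *\<^sub>R s"
    using transpose_diff_scaleR[of b 1 s] S B
    by (simp add: b_def s_def transpose_matrix_inv_symmetric)
  then have "0 \<le> trace ((b - 1 *\<^sub>R s) ** B ** (b - 1 *\<^sub>R s) ** S)"
    using S(1) psd_matrix_congruence B(3) by blast
  moreover have "b ** B ** s = s" "s ** B ** b = s" "b ** B ** b = b" "s ** B ** s ** S = s ** B"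
    "s ** S = mat 1"
    unfolding b_def s_def using S(2) B(1)
    by (metis matrix_inv_left matrix_inv_right matrix_mul_assoc matrix_mul_lid matrix_mul_rid)+
  ultimately show ?thesis
    unfolding b_def[symmetric] s_def[symmetric] trace_congruence_diff_expand by (simp add: trace_I)
qed

section \<open>Outer products and weighted Gram matrices\<close>

lemma outer_prod_mult_vec: "outer_prod u *v v = (u \<bullet> v) *\<^sub>R u"
  by (simp add: outer_prod_def matrix_vector_mult_def vec_eq_iff inner_vec_def sum_distrib_left mult_ac)

lemma trace_mult_outer_prod: "trace (W ** outer_prod v) = v \<bullet> (W *v v)"
  by (simp add: trace_def matrix_matrix_mult_def outer_prod_def inner_vec_def matrix_vector_mult_def
      sum_distrib_left mult_ac)

lemma trace_outer_prod_mult: "trace (outer_prod v ** W) = v \<bullet> (W *v v)"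
  by (metis trace_mul_sym trace_mult_outer_prod)

lemma psd_matrix_outer_prod: "psd_matrix (outer_prod u)"
  by (simp add: psd_matrix_def outer_prod_mult_vec inner_commute)

lemma psd_matrix_if_trace_nonneg:
  assumes "\<And>W. psd_matrix W \<Longrightarrow> 0 \<le> trace (W ** S)"
  shows "psd_matrix S"
  unfolding psd_matrix_def
  using assms[OF psd_matrix_outer_prod] by (simp add: trace_outer_prod_mult)

definition weighted_gram :: "('n::finite \<Rightarrow> real) \<Rightarrow> ('n \<Rightarrow> real^'p::finite) \<Rightarrow> real^'p^'p" where
  "weighted_gram c u = (\<Sum>i\<in>UNIV. c i *\<^sub>R outer_prod (u i))"

lemma weighted_gram_mult_vec: "weighted_gram c u *v v = (\<Sum>i\<in>UNIV. (c i * (u i \<bullet> v)) *\<^sub>R u i)"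
  for u :: "'n::finite \<Rightarrow> real^'p::finite"
proof -
  have "(\<Sum>i\<in>I. F i) *v v = (\<Sum>i\<in>I. F i *v v)" for I and F :: "'n \<Rightarrow> real^'p^'p"
    by (simp add: matrix_vector_mult_def vec_eq_iff sum_distrib_right sum_component sum.swap[of _ UNIV])
  moreover have "(a *\<^sub>R F) *v v = a *\<^sub>R (F *v v)" for a and F :: "real^'p^'p"
    by (simp add: matrix_vector_mult_def vec_eq_iff sum_distrib_left mult_ac)
  ultimately show ?thesis
    by (simp add: weighted_gram_def outer_prod_mult_vec)
qed

lemma inner_weighted_gram: "v \<bullet> (weighted_gram c u *v v) = (\<Sum>i\<in>UNIV. c i * (u i \<bullet> v)\<^sup>2)"
  by (simp add: weighted_gram_mult_vec inner_sum_right power2_eq_square inner_commute mult_ac)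

lemma trace_mult_weighted_gram:
  "trace (W ** weighted_gram c u) = (\<Sum>i\<in>UNIV. c i * trace (W ** outer_prod (u i)))"
  unfolding weighted_gram_def
  by (simp add: linear_sum[OF bounded_linear.linear[OF bounded_linear_trace_mult_left]]
      matrix_scaleR_right trace_scaleR)

lemma transpose_weighted_gram: "transpose (weighted_gram c u) = weighted_gram c u"
  by (simp add: weighted_gram_def transpose_def outer_prod_def vec_eq_iff sum_component mult.commute)

lemma psd_matrix_weighted_gram: "(\<And>i. 0 \<le> c i) \<Longrightarrow> psd_matrix (weighted_gram c u)"
  by (simp add: psd_matrix_def inner_weighted_gram sum_nonneg)

lemma inner_weighted_gram_eq_0_iff:
  "(\<And>i. 0 \<le> c i) \<Longrightarrow> v \<bullet> (weighted_gram c u *v v) = 0 \<longleftrightarrow> (\<forall>i. c i = 0 \<or> u i \<bullet> v = 0)"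
  by (simp add: inner_weighted_gram sum_nonneg_eq_0_iff)

lemma eq_0_if_inner_gram_eq_0:
  assumes "\<And>i. 0 \<le> c i" "invertible (weighted_gram c u)"
    and "v \<bullet> (weighted_gram (\<lambda>_. 1) u *v v) = 0"
  shows "v = 0"
proof -
  have "\<forall>i. u i \<bullet> v = 0"
    using inner_weighted_gram_eq_0_iff[of "\<lambda>_. 1" v u] assms(3) by simp
  then have "weighted_gram c u *v v = 0"
    by (simp add: weighted_gram_mult_vec)
  then show ?thesis
    using inj_matrix_vector_mult[OF assms(2)] by (metis injD matrix_vector_mult_0_right)
qed

lemma invertible_if_ker_trivial:
  "(\<And>v. A *v v = 0 \<Longrightarrow> v = 0) \<Longrightarrow> invertible (A::real^'n::finite^'n)"
  using matrix_left_invertible_ker invertible_left_inverse by blast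

lemma invertible_gram_if_invertible_weighted_gram:
  assumes "\<And>i. 0 \<le> c i" "invertible (weighted_gram c u)"
  shows "invertible (weighted_gram (\<lambda>_. 1) u)"
  using eq_0_if_inner_gram_eq_0[OF assms] by (intro invertible_if_ker_trivial) simp

lemma vec_nth_design_matrix [simp]: "($) (design_matrix xs \<omega>) = (\<lambda>i. xs i \<omega>)"
  by (simp add: design_matrix_def fun_eq_iff)

lemma transpose_mult_weight_matrix_mult:
  "transpose X ** weight_matrix g \<beta> X ** X = weighted_gram (\<lambda>i. deriv g (X $ i \<bullet> \<beta>)) (($) X)"
  by (simp add: vec_eq_iff matrix_matrix_mult_def transpose_def weight_matrix_def weighted_gram_def
      outer_prod_def sum_component if_distrib if_distribR sum.delta' mult_ac cong: if_cong)

lemma transpose_mult_self: "transpose X ** X = weighted_gram (\<lambda>_. 1) (($) X)"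
  by (simp add: vec_eq_iff matrix_matrix_mult_def transpose_def weighted_gram_def outer_prod_def
      sum_component)

section \<open>Measurability and derivatives\<close>

lemma borel_measurable_vec_lambda [measurable]:
  fixes f :: "'i::finite \<Rightarrow> 'a \<Rightarrow> 'b::euclidean_space"
  assumes "\<And>i. f i \<in> borel_measurable M"
  shows "(\<lambda>x. \<chi> i. f i x) \<in> borel_measurable M"
  unfolding borel_measurable_euclidean_space[where 'c="'b^'i"]
proof
  fix b :: "'b^'i" assume "b \<in> Basis"
  then obtain j u where "b = axis j u" "u \<in> Basis" unfolding Basis_vec_def by auto
  then show "(\<lambda>x. (\<chi> i. f i x) \<bullet> b) \<in> borel_measurable M"
    using assms by (simp add: inner_axis)
qed

lemma borel_measurable_vec_nth [measurable]:
  "(\<lambda>v::'b::euclidean_space^'i::finite. v $ i) \<in> borel_measurable borel"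
  by (intro borel_measurable_continuous_onI continuous_on_component continuous_on_id)

lemma borel_measurable_matrix_mult [measurable]:
  fixes f :: "'a \<Rightarrow> real^'n::finite^'m::finite" and g :: "'a \<Rightarrow> real^'k::finite^'n"
  assumes [measurable]: "f \<in> borel_measurable M" "g \<in> borel_measurable M"
  shows "(\<lambda>x. f x ** g x) \<in> borel_measurable M"
  unfolding matrix_matrix_mult_def by measurable

lemma borel_measurable_trace [measurable]:
  "(trace :: real^'n::finite^'n \<Rightarrow> real) \<in> borel_measurable borel"
  unfolding trace_def by measurable

lemma borel_measurable_outer_prod [measurable]:
  "(outer_prod :: real^'p::finite \<Rightarrow> _) \<in> borel_measurable borel"
  unfolding outer_prod_def by measurable

lemma matrix_inv_nth_cramer:
  assumes "invertible (A::real^'n::finite^'n)"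
  shows "matrix_inv A $ k $ j = det (\<chi> a b. if b = k then (if a = j then 1 else 0) else A $ a $ b) / det A"
proof -
  have column: "A *v (\<chi> i. matrix_inv A $ i $ j) = (\<chi> a. if a = j then 1 else 0)"
    using matrix_inv_right[OF assms]
    by (simp add: vec_eq_iff matrix_vector_mult_def matrix_matrix_mult_def mat_def)
  have "det A \<noteq> 0"
    using assms invertible_det_nz by blast
  then show ?thesis
    using cramer_lemma[of k A "\<chi> i. matrix_inv A $ i $ j"]
    unfolding column by (simp add: field_simps cong: if_cong)
qed

lemma borel_measurable_det [measurable]: "(det :: real^'n::finite^'n \<Rightarrow> real) \<in> borel_measurable borel"
  unfolding det_def by measurable

lemma borel_measurable_matrix_inv [measurable]:
  "(matrix_inv :: real^'n::finite^'n \<Rightarrow> _) \<in> borel_measurable borel"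
proof -
  have "matrix_inv A = (SOME A'. False)" if "\<not> invertible A" for A :: "real^'n^'n"
    using that unfolding matrix_inv_def invertible_def by (metis (no_types, lifting))
  then have "matrix_inv = (\<lambda>A::real^'n^'n. if det A = 0 then (SOME A'. False)
      else \<chi> k j. det (\<chi> a b. if b = k then (if a = j then 1 else 0) else A $ a $ b) / det A)"
    by (auto simp: fun_eq_iff vec_eq_iff matrix_inv_nth_cramer invertible_det_nz)
  then show ?thesis
    by (rule ssubst) measurable
qed

lemma deriv_nonneg_if_mono:
  fixes g :: "real \<Rightarrow> real"
  assumes "mono g" "g differentiable (at t)"
  shows "0 \<le> deriv g t"
  using mono_on_imp_deriv_nonneg[of UNIV g] assms
  by (simp flip: DERIV_deriv_iff_real_differentiable)

lemma borel_measurable_deriv: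
  fixes g :: "real \<Rightarrow> real"
  assumes "\<And>t. g differentiable (at t)"
  shows "deriv g \<in> borel_measurable borel"
proof (rule borel_measurable_LIMSEQ_real)
  have [measurable]: "g \<in> borel_measurable borel"
    using assms differentiable_imp_continuous_within continuous_at_imp_continuous_on
    by (blast intro: borel_measurable_continuous_onI)
  show "(\<lambda>t. (g (t + inverse (Suc n)) - g t) / inverse (Suc n)) \<in> borel_measurable borel" for n
    by measurable
  fix t
  have "((\<lambda>h. (g (t + h) - g t) / h) \<longlongrightarrow> deriv g t) (at 0)"
    using assms DERIV_deriv_iff_real_differentiable by (simp add: DERIV_def)
  then show "(\<lambda>n. (g (t + inverse (Suc n)) - g t) / inverse (Suc n)) \<longlonglongrightarrow> deriv g t"
    unfolding tendsto_at_iff_sequentially[where s=UNIV] comp_def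
    using LIMSEQ_inverse_real_of_nat by auto
qed

lemma integral_matrix_nth:
  fixes f :: "'a \<Rightarrow> real^'n::finite^'m::finite"
  assumes "integrable M f"
  shows "integral\<^sup>L M f $ a $ b = (\<integral>\<omega>. f \<omega> $ a $ b \<partial>M)"
    and "integrable M (\<lambda>\<omega>. f \<omega> $ a $ b)"
proof -
  have "bounded_linear (\<lambda>Z::real^'n^'m. Z $ a $ b)"
    by (rule bounded_linear_compose[OF bounded_linear_vec_nth bounded_linear_vec_nth])
  from integral_bounded_linear[OF this assms] integrable_bounded_linear[OF this assms]
  show "integral\<^sup>L M f $ a $ b = (\<integral>\<omega>. f \<omega> $ a $ b \<partial>M)" "integrable M (\<lambda>\<omega>. f \<omega> $ a $ b)"
    by simp_all
qed

lemma nn_integral_ennreal_sum_AE: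
  assumes "\<And>i. i \<in> I \<Longrightarrow> f i \<in> borel_measurable M" "AE x in M. \<forall>i\<in>I. 0 \<le> f i x"
  shows "(\<integral>\<^sup>+x. ennreal (\<Sum>i\<in>I. f i x) \<partial>M) = (\<Sum>i\<in>I. \<integral>\<^sup>+x. ennreal (f i x) \<partial>M)"
proof -
  have "(\<integral>\<^sup>+x. ennreal (\<Sum>i\<in>I. f i x) \<partial>M) = (\<integral>\<^sup>+x. (\<Sum>i\<in>I. ennreal (f i x)) \<partial>M)"
    using assms(2) by (intro nn_integral_cong_AE) (auto elim!: eventually_mono)
  also have "\<dots> = (\<Sum>i\<in>I. \<integral>\<^sup>+x. ennreal (f i x) \<partial>M)"
    using assms(1) by (intro nn_integral_sum) simp
  finally show ?thesis .
qed

lemma (in finite_measure) integrable_if_truncations_bounded: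
  fixes f :: "'a \<Rightarrow> real"
  assumes [measurable]: "f \<in> borel_measurable M" and nonneg: "AE x in M. 0 \<le> f x"
    and bounded: "\<And>K::nat. (\<integral>x. (if f x \<le> K then f x else 0) \<partial>M) \<le> C"
  shows "integrable M f" and "integral\<^sup>L M f \<le> C"
proof -
  define t where "t K x = (if f x \<le> real K then f x else 0)" for K x
  have [measurable]: "t K \<in> borel_measurable M" for K
    unfolding t_def[abs_def] by measurable
  have t_nonneg: "AE x in M. 0 \<le> t K x" for K
    using nonneg by eventually_elim (simp add: t_def)
  have "integrable M (t K)" for K
    using nonneg by (intro integrable_const_bound[where B="real K"]) (auto simp: t_def elim!: eventually_mono)
  then have "(\<integral>\<^sup>+x. t K x \<partial>M) \<le> ennreal C" for K
    using bounded[of K] t_nonneg by (simp add: nn_integral_eq_integral t_def[abs_def] ennreal_leI)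
  moreover have "(\<integral>\<^sup>+x. f x \<partial>M) = (SUP K. \<integral>\<^sup>+x. t K x \<partial>M)"
  proof -
    have "(SUP K. ennreal (t K x)) = ennreal (f x)" for x
    proof (rule antisym)
      show "(SUP K. ennreal (t K x)) \<le> ennreal (f x)"
        by (rule SUP_least) (auto simp: t_def)
      have "ennreal (t (nat \<lceil>f x\<rceil>) x) = ennreal (f x)"
        by (simp add: t_def real_nat_ceiling_ge)
      then show "ennreal (f x) \<le> (SUP K. ennreal (t K x))"
        by (metis SUP_upper UNIV_I)
    qed
    moreover have "incseq (\<lambda>K x. ennreal (t K x))"
      by (intro incseq_SucI le_funI) (auto simp: t_def)
    ultimately show ?thesis
      using nn_integral_monotone_convergence_SUP[of "\<lambda>K x. ennreal (t K x)" M] by simp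
  qed
  ultimately have le: "(\<integral>\<^sup>+x. f x \<partial>M) \<le> ennreal C"
    by (simp add: SUP_least)
  then show integrable: "integrable M f"
    using nonneg by (intro integrableI_nonneg) (auto intro: le_less_trans)
  have "0 \<le> C"
    using bounded[of 0] integral_nonneg_AE[OF t_nonneg[of 0]] by (simp add: t_def)
  then show "integral\<^sup>L M f \<le> C"
    using le nonneg
    by (auto simp: nn_integral_eq_integral[OF integrable nonneg] ennreal_le_iff2)
qed

lemma (in product_sigma_finite) nn_integral_PiM_UNIV_split:
  assumes "finite (UNIV :: 'i set)" "G \<in> borel_measurable (PiM UNIV M)"
  shows "integral\<^sup>N (PiM UNIV M) G = (\<integral>\<^sup>+z. (\<integral>\<^sup>+y. G (z(i := y)) \<partial>M i) \<partial>PiM (UNIV - {i}) M)"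
proof -
  have "insert i (UNIV - {i}) = UNIV" by auto
  then show ?thesis
    using product_nn_integral_insert[of "UNIV - {i}" i G] assms by simp
qed

section \<open>The sampling model\<close>

locale glm_design = prob_space M for M :: "'a measure" +
  fixes x :: "'a \<Rightarrow> real^'p::finite"
    and xs :: "'n::finite \<Rightarrow> 'a \<Rightarrow> real^'p"
    and g :: "real \<Rightarrow> real"
    and \<beta> :: "real^'p"
    and \<delta> :: real
  assumes measurable_x [measurable]: "x \<in> borel_measurable M"
    and indep_xs: "indep_vars (\<lambda>_. borel) xs UNIV"
    and distr_xs: "\<And>i. distr M borel (xs i) = distr M borel x"
    and integrable_outer_prod_x: "integrable M (\<lambda>\<omega>. outer_prod (x \<omega>))"
    and mono_g: "mono g"
    and differentiable_g: "\<And>t. g differentiable (at t)"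
    and delta_pos: "0 < \<delta>"
    and cond_exp_deriv_g: "AE \<omega> in M. real_cond_exp M (vimage_algebra (space M) (\<lambda>\<omega>. outer_prod (x \<omega>)) borel)
      (\<lambda>\<omega>. deriv g (x \<omega> \<bullet> \<beta>)) \<omega> = \<delta>"
begin

abbreviation outer_prod_algebra :: "'a measure" where
  "outer_prod_algebra \<equiv> vimage_algebra (space M) (\<lambda>\<omega>. outer_prod (x \<omega>)) borel"

lemma measurable_xs [measurable]: "xs i \<in> borel_measurable M"
  using indep_xs unfolding indep_vars_def by auto

lemma measurable_deriv_g [measurable]: "deriv g \<in> borel_measurable borel"
  using borel_measurable_deriv[OF differentiable_g] .

lemma deriv_g_nonneg: "0 \<le> deriv g t"
  using deriv_nonneg_if_mono[OF mono_g differentiable_g] .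

lemma measurable_outer_prod_x_algebra: "(\<lambda>\<omega>. outer_prod (x \<omega>)) \<in> measurable outer_prod_algebra borel"
  by (rule measurable_vimage_algebra1) simp

lemma sigma_finite_outer_prod_algebra: "sigma_finite_subalgebra M outer_prod_algebra"
proof -
  have "(\<lambda>\<omega>. outer_prod (x \<omega>)) \<in> borel_measurable M"
    by measurable
  from sets_image_in_sets[OF refl this] have "subalgebra M outer_prod_algebra"
    unfolding subalgebra_def by simp
  then show ?thesis
    by (intro finite_measure_subalgebra_is_sigma_finite finite_measure_subalgebra.intro
        finite_measure_subalgebra_axioms.intro) unfold_locales
qed

lemma nn_cond_exp_deriv_g:
  "AE \<omega> in M. nn_cond_exp M outer_prod_algebra (\<lambda>\<omega>. ennreal (deriv g (x \<omega> \<bullet> \<beta>))) \<omega> = ennreal \<delta>"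
proof -
  have zero: "(\<lambda>\<omega>. ennreal (- deriv g (x \<omega> \<bullet> \<beta>))) = (\<lambda>\<omega>. 0)"
    using deriv_g_nonneg by (simp add: ennreal_neg)
  have "AE \<omega> in M. nn_cond_exp M outer_prod_algebra (\<lambda>\<omega>. 0) \<omega> = 0"
    using sigma_finite_subalgebra.nn_cond_exp_F_meas[OF sigma_finite_outer_prod_algebra, of "\<lambda>_. 0"]
    by (auto elim: AE_mp)
  then show ?thesis
    using cond_exp_deriv_g
  proof eventually_elim
    case (elim \<omega>)
    let ?y = "nn_cond_exp M outer_prod_algebra (\<lambda>\<omega>. ennreal (deriv g (x \<omega> \<bullet> \<beta>))) \<omega>"
    have "enn2real ?y = \<delta>"
      using elim unfolding real_cond_exp_def zero by simp
    then show ?case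
      using delta_pos by (cases ?y) auto
  qed
qed

lemma nn_integral_deriv_g_mult:
  assumes [measurable]: "k \<in> borel_measurable borel"
  shows "(\<integral>\<^sup>+\<omega>. ennreal (deriv g (x \<omega> \<bullet> \<beta>)) * k (outer_prod (x \<omega>)) \<partial>M)
       = ennreal \<delta> * (\<integral>\<^sup>+\<omega>. k (outer_prod (x \<omega>)) \<partial>M)"
proof -
  have k_outer: "(\<lambda>\<omega>. k (outer_prod (x \<omega>))) \<in> borel_measurable outer_prod_algebra"
    using measurable_compose[OF measurable_outer_prod_x_algebra assms] .
  have "(\<integral>\<^sup>+\<omega>. ennreal (deriv g (x \<omega> \<bullet> \<beta>)) * k (outer_prod (x \<omega>)) \<partial>M)
      = (\<integral>\<^sup>+\<omega>. k (outer_prod (x \<omega>)) *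
          nn_cond_exp M outer_prod_algebra (\<lambda>\<omega>. ennreal (deriv g (x \<omega> \<bullet> \<beta>))) \<omega> \<partial>M)"
    by (subst sigma_finite_subalgebra.nn_cond_exp_intg[OF sigma_finite_outer_prod_algebra k_outer])
      (simp_all add: mult.commute)
  also have "\<dots> = (\<integral>\<^sup>+\<omega>. ennreal \<delta> * k (outer_prod (x \<omega>)) \<partial>M)"
    using nn_cond_exp_deriv_g by (intro nn_integral_cong_AE) (auto simp: mult.commute)
  finally show ?thesis
    by (simp add: nn_integral_cmult)
qed

lemma integrable_deriv_g_outer_prod:
  "integrable M (\<lambda>\<omega>. deriv g (x \<omega> \<bullet> \<beta>) *\<^sub>R outer_prod (x \<omega>))"
proof -
  have "(\<integral>\<^sup>+\<omega>. norm (deriv g (x \<omega> \<bullet> \<beta>) *\<^sub>R outer_prod (x \<omega>)) \<partial>M)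
     = (\<integral>\<^sup>+\<omega>. ennreal (deriv g (x \<omega> \<bullet> \<beta>)) * ennreal (norm (outer_prod (x \<omega>))) \<partial>M)"
    by (intro nn_integral_cong) (simp add: deriv_g_nonneg ennreal_mult)
  also have "\<dots> = ennreal \<delta> * (\<integral>\<^sup>+\<omega>. norm (outer_prod (x \<omega>)) \<partial>M)"
    by (rule nn_integral_deriv_g_mult) measurable
  also have "\<dots> < \<infinity>"
    using integrable_outer_prod_x unfolding integrable_iff_bounded by (simp add: ennreal_mult_less_top)
  finally show ?thesis
    unfolding integrable_iff_bounded by simp
qed

lemma integral_deriv_g_outer_prod:
  "(\<integral>\<omega>. deriv g (x \<omega> \<bullet> \<beta>) *\<^sub>R outer_prod (x \<omega>) \<partial>M) = \<delta> *\<^sub>R (\<integral>\<omega>. outer_prod (x \<omega>) \<partial>M)"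
proof -
  have "(\<integral>\<omega>. outer_prod (x \<omega>) $ a $ b * deriv g (x \<omega> \<bullet> \<beta>) \<partial>M)
      = (\<integral>\<omega>. outer_prod (x \<omega>) $ a $ b * \<delta> \<partial>M)" for a b
  proof -
    have entry: "(\<lambda>\<omega>. outer_prod (x \<omega>) $ a $ b) \<in> borel_measurable outer_prod_algebra"
      using measurable_outer_prod_x_algebra by measurable
    have "integrable M (\<lambda>\<omega>. outer_prod (x \<omega>) $ a $ b * deriv g (x \<omega> \<bullet> \<beta>))"
      using integral_matrix_nth(2)[OF integrable_deriv_g_outer_prod] by (simp add: mult.commute)
    from sigma_finite_subalgebra.real_cond_exp_intg(2)[OF sigma_finite_outer_prod_algebra this entry]
    have "(\<integral>\<omega>. outer_prod (x \<omega>) $ a $ b * deriv g (x \<omega> \<bullet> \<beta>) \<partial>M)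
      = (\<integral>\<omega>. outer_prod (x \<omega>) $ a $ b * real_cond_exp M outer_prod_algebra (\<lambda>\<omega>. deriv g (x \<omega> \<bullet> \<beta>)) \<omega> \<partial>M)"
      by simp
    also have "\<dots> = (\<integral>\<omega>. outer_prod (x \<omega>) $ a $ b * \<delta> \<partial>M)"
      using cond_exp_deriv_g by (intro integral_cong_AE) (measurable, auto)
    finally show ?thesis .
  qed
  then show ?thesis
    by (simp add: vec_eq_iff integral_matrix_nth integrable_deriv_g_outer_prod integrable_outer_prod_x
        mult.commute)
qed

lemma integrable_xs_iff:
  fixes f :: "real^'p \<Rightarrow> 'b::{banach, second_countable_topology}"
  assumes [measurable]: "f \<in> borel_measurable borel"
  shows "integrable M (\<lambda>\<omega>. f (xs i \<omega>)) \<longleftrightarrow> integrable M (\<lambda>\<omega>. f (x \<omega>))"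
  using integrable_distr_eq[of "xs i" M borel f] integrable_distr_eq[of x M borel f] distr_xs[of i]
  by simp

lemma integral_xs:
  fixes f :: "real^'p \<Rightarrow> 'b::{banach, second_countable_topology}"
  assumes [measurable]: "f \<in> borel_measurable borel"
  shows "(\<integral>\<omega>. f (xs i \<omega>) \<partial>M) = (\<integral>\<omega>. f (x \<omega>) \<partial>M)"
  by (metis assms distr_xs integral_distr measurable_x measurable_xs)

lemma integrable_outer_prod_xs: "integrable M (\<lambda>\<omega>. outer_prod (xs i \<omega>))"
  using integrable_xs_iff[of outer_prod] integrable_outer_prod_x by simp

lemma integrable_deriv_g_outer_prod_xs:
  "integrable M (\<lambda>\<omega>. deriv g (xs i \<omega> \<bullet> \<beta>) *\<^sub>R outer_prod (xs i \<omega>))"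
  using integrable_xs_iff[of "\<lambda>z. deriv g (z \<bullet> \<beta>) *\<^sub>R outer_prod z"] integrable_deriv_g_outer_prod
  by simp

lemma integral_deriv_g_outer_prod_xs:
  "(\<integral>\<omega>. deriv g (xs i \<omega> \<bullet> \<beta>) *\<^sub>R outer_prod (xs i \<omega>) \<partial>M) = \<delta> *\<^sub>R (\<integral>\<omega>. outer_prod (xs i \<omega>) \<partial>M)"
  using integral_xs[of "\<lambda>z. deriv g (z \<bullet> \<beta>) *\<^sub>R outer_prod z"] integral_xs[of outer_prod]
    integral_deriv_g_outer_prod
  by simp

lemma nn_integral_xs_eq_PiM:
  assumes "G \<in> borel_measurable (PiM UNIV (\<lambda>_::'n. borel :: (real^'p) measure))"
  shows "(\<integral>\<^sup>+\<omega>. G (\<lambda>j. xs j \<omega>) \<partial>M) = (\<integral>\<^sup>+y. G y \<partial>PiM UNIV (\<lambda>_. distr M borel x))"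
proof -
  have "distr M (PiM UNIV (\<lambda>_. borel)) (\<lambda>\<omega>. \<lambda>j\<in>UNIV. xs j \<omega>) = PiM UNIV (\<lambda>_. distr M borel x)"
    using indep_vars_iff_distr_eq_PiM[where I=UNIV and X=xs and M'="\<lambda>_. borel"] indep_xs
    by (simp add: distr_xs)
  moreover have "(\<lambda>\<omega>. \<lambda>j\<in>UNIV. xs j \<omega>) \<in> measurable M (PiM UNIV (\<lambda>_. borel))"
    by measurable
  ultimately show ?thesis
    using nn_integral_distr[of "\<lambda>\<omega>. \<lambda>j\<in>UNIV. xs j \<omega>" M "PiM UNIV (\<lambda>_. borel)" G] assms
    by (simp add: restrict_def)
qed

lemma nn_integral_deriv_g_xs_mult:
  fixes \<Phi> :: "real^'p^'p^'n \<Rightarrow> ennreal"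
  assumes [measurable]: "\<Phi> \<in> borel_measurable borel"
  shows "(\<integral>\<^sup>+\<omega>. ennreal (deriv g (xs i \<omega> \<bullet> \<beta>)) * \<Phi> (\<chi> j. outer_prod (xs j \<omega>)) \<partial>M)
       = ennreal \<delta> * (\<integral>\<^sup>+\<omega>. \<Phi> (\<chi> j. outer_prod (xs j \<omega>)) \<partial>M)"
proof -
  let ?\<mu> = "distr M borel x"
  interpret \<mu>: prob_space ?\<mu>
    by (rule prob_space_distr) simp
  interpret product_sigma_finite "\<lambda>_::'n. ?\<mu>"
    unfolding product_sigma_finite_def using \<mu>.sigma_finite_measure_axioms by simp
  define G1 G2 where "G1 y = ennreal (deriv g (y i \<bullet> \<beta>)) * \<Phi> (\<chi> j. outer_prod (y j))"
    and "G2 y = ennreal \<delta> * \<Phi> (\<chi> j. outer_prod (y j))" for y :: "'n \<Rightarrow> real^'p"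
  have [measurable]: "G1 \<in> borel_measurable (PiM UNIV (\<lambda>_. borel))"
    "G2 \<in> borel_measurable (PiM UNIV (\<lambda>_. borel))"
    unfolding G1_def[abs_def] G2_def[abs_def] by measurable
  have inner: "(\<integral>\<^sup>+y. G1 (z(i := y)) \<partial>?\<mu>) = (\<integral>\<^sup>+y. G2 (z(i := y)) \<partial>?\<mu>)" for z
  proof -
    define K where "K Z = \<Phi> (\<chi> j. if j = i then Z else outer_prod (z j))" for Z
    have [measurable]: "K \<in> borel_measurable borel"
      unfolding K_def[abs_def] by measurable
    have "(\<integral>\<^sup>+y. ennreal (deriv g (y \<bullet> \<beta>)) * K (outer_prod y) \<partial>?\<mu>) = ennreal \<delta> * (\<integral>\<^sup>+y. K (outer_prod y) \<partial>?\<mu>)"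
      using nn_integral_deriv_g_mult[of K] by (simp add: nn_integral_distr)
    then show ?thesis
      by (simp add: G1_def G2_def K_def nn_integral_cmult fun_upd_def if_distrib cong: if_cong)
  qed
  have sets_eq: "sets (PiM UNIV (\<lambda>_::'n. ?\<mu>)) = sets (PiM UNIV (\<lambda>_. borel))"
    by (intro sets_PiM_cong) simp_all
  have fubini: "(\<integral>\<^sup>+y. G y \<partial>PiM UNIV (\<lambda>_. ?\<mu>))
      = (\<integral>\<^sup>+z. (\<integral>\<^sup>+y. G (z(i := y)) \<partial>?\<mu>) \<partial>PiM (UNIV - {i}) (\<lambda>_. ?\<mu>))"
    if "G \<in> borel_measurable (PiM UNIV (\<lambda>_. borel))" for G
    using that by (intro nn_integral_PiM_UNIV_split) (simp_all add: measurable_cong_sets[OF sets_eq refl])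
  have "(\<integral>\<^sup>+y. G1 y \<partial>PiM UNIV (\<lambda>_. ?\<mu>)) = (\<integral>\<^sup>+y. G2 y \<partial>PiM UNIV (\<lambda>_. ?\<mu>))"
    by (simp add: fubini inner)
  then have "(\<integral>\<^sup>+\<omega>. G1 (\<lambda>j. xs j \<omega>) \<partial>M) = (\<integral>\<^sup>+\<omega>. G2 (\<lambda>j. xs j \<omega>) \<partial>M)"
    by (simp add: nn_integral_xs_eq_PiM)
  then show ?thesis
    by (simp add: G1_def G2_def nn_integral_cmult)
qed

\<comment> \<open>In the paper's notation hess \<omega> = X^T D X and gram \<omega> = X^T X, cf. design_matrix_hess below.\<close>
definition hess :: "'a \<Rightarrow> real^'p^'p" where
  "hess \<omega> = weighted_gram (\<lambda>i. deriv g (xs i \<omega> \<bullet> \<beta>)) (\<lambda>i. xs i \<omega>)"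

definition gram :: "'a \<Rightarrow> real^'p^'p" where
  "gram \<omega> = weighted_gram (\<lambda>_. 1) (\<lambda>i. xs i \<omega>)"

definition mean_gram :: "real^'p^'p" where
  "mean_gram = (\<integral>\<omega>. gram \<omega> \<partial>M)"

lemma measurable_gram [measurable]: "gram \<in> borel_measurable M"
  unfolding gram_def[abs_def] weighted_gram_def by measurable

lemma integrable_gram: "integrable M gram"
  unfolding gram_def[abs_def] weighted_gram_def using integrable_outer_prod_xs by simp

lemma integral_hess: "(\<integral>\<omega>. hess \<omega> \<partial>M) = \<delta> *\<^sub>R mean_gram"
  unfolding mean_gram_def hess_def[abs_def] gram_def[abs_def] weighted_gram_def
  using integrable_outer_prod_xs integrable_deriv_g_outer_prod_xs
  by (simp add: integral_deriv_g_outer_prod_xs scaleR_sum_right)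

lemma integral_trace_mult_gram: "(\<integral>\<omega>. trace (W ** gram \<omega>) \<partial>M) = trace (W ** mean_gram)"
  and integrable_trace_mult_gram: "integrable M (\<lambda>\<omega>. trace (W ** gram \<omega>))"
  unfolding mean_gram_def
  using integral_bounded_linear[OF bounded_linear_trace_mult_left integrable_gram]
    integrable_bounded_linear[OF bounded_linear_trace_mult_left integrable_gram] by simp_all

lemma trace_mult_mean_gram_nonneg: "psd_matrix W \<Longrightarrow> 0 \<le> trace (W ** mean_gram)"
  unfolding integral_trace_mult_gram[symmetric] gram_def trace_mult_weighted_gram trace_mult_outer_prod
  by (auto simp: psd_matrix_def intro!: integral_nonneg_AE sum_nonneg)

lemma transpose_mean_gram: "transpose mean_gram = mean_gram"
  unfolding mean_gram_def integral_bounded_linear[OF bounded_linear_transpose integrable_gram, symmetric]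
  by (simp add: gram_def[abs_def] transpose_weighted_gram)

lemma psd_matrix_mean_gram: "psd_matrix mean_gram"
  using psd_matrix_if_trace_nonneg trace_mult_mean_gram_nonneg by blast

lemma invertible_gram: "invertible (hess \<omega>) \<Longrightarrow> invertible (gram \<omega>)"
  unfolding hess_def gram_def by (rule invertible_gram_if_invertible_weighted_gram[OF deriv_g_nonneg])

lemma invertible_mean_gram:
  assumes "AE \<omega> in M. invertible (hess \<omega>)"
  shows "invertible mean_gram"
proof (rule invertible_if_ker_trivial)
  fix v assume "mean_gram *v v = 0"
  then have "(\<integral>\<omega>. v \<bullet> (gram \<omega> *v v) \<partial>M) = 0"
    using integral_trace_mult_gram[of "outer_prod v"] by (simp add: trace_outer_prod_mult)
  moreover have "integrable M (\<lambda>\<omega>. v \<bullet> (gram \<omega> *v v))"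
    using integrable_trace_mult_gram[of "outer_prod v"] by (simp add: trace_outer_prod_mult)
  moreover have "AE \<omega> in M. 0 \<le> v \<bullet> (gram \<omega> *v v)"
    by (simp add: gram_def inner_weighted_gram sum_nonneg)
  ultimately have "AE \<omega> in M. v \<bullet> (gram \<omega> *v v) = 0"
    using integral_nonneg_eq_0_iff_AE by blast
  then have "AE \<omega> in M. v = 0"
    using assms unfolding hess_def gram_def
    by eventually_elim (rule eq_0_if_inner_gram_eq_0[OF deriv_g_nonneg])
  then show "v = 0"
    by simp
qed

definition sandwich_trace :: "'a \<Rightarrow> real" where
  "sandwich_trace \<omega> = trace (matrix_inv (hess \<omega>) ** gram \<omega> ** matrix_inv (hess \<omega>) ** mean_gram)"

definition gram_inv_trace :: "'a \<Rightarrow> real" where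
  "gram_inv_trace \<omega> = trace (matrix_inv (gram \<omega>) ** mean_gram)"

definition leverage :: "'n \<Rightarrow> 'a \<Rightarrow> real" where
  "leverage i \<omega> = trace (matrix_inv (gram \<omega>) ** mean_gram ** matrix_inv (gram \<omega>) ** outer_prod (xs i \<omega>))"

definition weighted_leverage :: "'a \<Rightarrow> real" where
  "weighted_leverage \<omega> = (\<Sum>i\<in>UNIV. deriv g (xs i \<omega> \<bullet> \<beta>) * leverage i \<omega>)"

lemma measurable_gram_inv_trace [measurable]: "gram_inv_trace \<in> borel_measurable M"
  unfolding gram_inv_trace_def[abs_def] by measurable

lemma measurable_leverage [measurable]: "leverage i \<in> borel_measurable M"
  unfolding leverage_def[abs_def] by measurable

lemma measurable_weighted_leverage [measurable]: "weighted_leverage \<in> borel_measurable M"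
  unfolding weighted_leverage_def[abs_def] by measurable

context
  fixes \<omega>
  assumes invertible_mean_gram: "invertible mean_gram"
    and invertible_hess: "invertible (hess \<omega>)"
begin

lemma leverage_nonneg: "0 \<le> leverage i \<omega>"
proof -
  have "psd_matrix (matrix_inv (gram \<omega>) ** mean_gram ** matrix_inv (gram \<omega>))"
    using invertible_gram[OF invertible_hess] psd_matrix_mean_gram
    by (simp add: psd_matrix_congruence transpose_matrix_inv_symmetric gram_def transpose_weighted_gram)
  then show ?thesis
    unfolding leverage_def trace_mult_outer_prod psd_matrix_def by simp
qed

lemma trace_gram_inv_sandwich_mult_weighted_gram:
  "trace (matrix_inv (gram \<omega>) ** mean_gram ** matrix_inv (gram \<omega>) ** weighted_gram c (\<lambda>i. xs i \<omega>))
    = (\<Sum>i\<in>UNIV. c i * leverage i \<omega>)"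
  by (simp add: trace_mult_weighted_gram leverage_def)

lemma gram_inv_trace_eq_sum_leverage: "gram_inv_trace \<omega> = (\<Sum>i\<in>UNIV. leverage i \<omega>)"
proof -
  have "matrix_inv (gram \<omega>) ** mean_gram ** matrix_inv (gram \<omega>) ** gram \<omega> = matrix_inv (gram \<omega>) ** mean_gram"
    using matrix_inv_left[OF invertible_gram[OF invertible_hess]] by (simp flip: matrix_mul_assoc)
  then show ?thesis
    using trace_gram_inv_sandwich_mult_weighted_gram[of "\<lambda>_. 1"]
    by (simp add: gram_inv_trace_def gram_def)
qed

lemma gram_inv_trace_tangent_bound:
  "3 / \<delta>\<^sup>2 * gram_inv_trace \<omega> \<le> sandwich_trace \<omega> + 2 / \<delta> ^ 3 * weighted_leverage \<omega>"
proof -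
  have "trace (matrix_inv (gram \<omega>) ** hess \<omega> ** matrix_inv (gram \<omega>) ** mean_gram) = weighted_leverage \<omega>"
    unfolding weighted_leverage_def trace_gram_inv_sandwich_mult_weighted_gram[symmetric] hess_def
    by (metis matrix_mul_assoc trace_mul_sym)
  moreover have "3 * (1 / \<delta>)\<^sup>2 * gram_inv_trace \<omega> \<le> sandwich_trace \<omega>
      + 2 * (1 / \<delta>) ^ 3 * trace (matrix_inv (gram \<omega>) ** hess \<omega> ** matrix_inv (gram \<omega>) ** mean_gram)"
    unfolding gram_inv_trace_def sandwich_trace_def
    using invertible_hess invertible_gram[OF invertible_hess] delta_pos deriv_g_nonneg
    by (intro trace_matrix_inv_tangent_bound trace_mult_mean_gram_nonneg)
      (simp_all add: hess_def gram_def transpose_weighted_gram psd_matrix_weighted_gram)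
  ultimately show ?thesis
    by (simp add: power_divide)
qed

lemma sandwich_trace_nonneg: "0 \<le> sandwich_trace \<omega>"
  unfolding sandwich_trace_def
  using invertible_hess psd_matrix_weighted_gram[of "\<lambda>_. 1" "\<lambda>i. xs i \<omega>"]
  by (intro trace_mult_mean_gram_nonneg psd_matrix_congruence transpose_matrix_inv_symmetric)
    (simp_all add: hess_def gram_def transpose_weighted_gram)

lemma two_card_le_gram_inv_trace_add_trace:
  "2 * real CARD('p) \<le> gram_inv_trace \<omega> + trace (matrix_inv mean_gram ** gram \<omega>)"
  unfolding gram_inv_trace_def
  using invertible_mean_gram invertible_gram[OF invertible_hess]
    psd_matrix_weighted_gram[of "\<lambda>_. 1" "\<lambda>i. xs i \<omega>"]
  by (intro trace_matrix_inv_add_trace_ge trace_mult_mean_gram_nonneg)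
    (simp_all add: transpose_mean_gram gram_def transpose_weighted_gram)

end

lemma nn_integral_truncated_weighted_leverage:
  assumes "invertible mean_gram" "AE \<omega> in M. invertible (hess \<omega>)"
  shows "(\<integral>\<^sup>+\<omega>. ennreal (if gram_inv_trace \<omega> \<le> K then weighted_leverage \<omega> else 0) \<partial>M)
    = \<delta> * (\<integral>\<^sup>+\<omega>. ennreal (if gram_inv_trace \<omega> \<le> K then gram_inv_trace \<omega> else 0) \<partial>M)"
proof -
  define t where "t i \<omega> = (if gram_inv_trace \<omega> \<le> K then leverage i \<omega> else 0)" for i \<omega>
  have [measurable]: "t i \<in> borel_measurable M" for i
    unfolding t_def[abs_def] by measurable
  have t_nonneg: "AE \<omega> in M. \<forall>i\<in>UNIV. 0 \<le> t i \<omega>"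
    using assms(2) by eventually_elim (simp add: t_def leverage_nonneg[OF assms(1)])
  have "(\<integral>\<^sup>+\<omega>. ennreal (deriv g (xs i \<omega> \<bullet> \<beta>) * t i \<omega>) \<partial>M) = \<delta> * (\<integral>\<^sup>+\<omega>. ennreal (t i \<omega>) \<partial>M)" for i
  proof -
    \<comment> \<open>The truncated leverage depends on the sample only through the outer products.\<close>
    define \<Phi> where "\<Phi> Z = ennreal (let B = \<Sum>j\<in>UNIV. Z $ j in
      if trace (matrix_inv B ** mean_gram) \<le> K
      then trace (matrix_inv B ** mean_gram ** matrix_inv B ** Z $ i) else 0)" for Z :: "real^'p^'p^'n"
    have [measurable]: "\<Phi> \<in> borel_measurable borel"
      unfolding \<Phi>_def[abs_def] Let_def by measurable
    have "\<Phi> (\<chi> j. outer_prod (xs j \<omega>)) = ennreal (t i \<omega>)" for \<omega>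
      by (simp add: \<Phi>_def t_def gram_inv_trace_def leverage_def gram_def weighted_gram_def Let_def)
    then have "(\<integral>\<^sup>+\<omega>. ennreal (deriv g (xs i \<omega> \<bullet> \<beta>)) * ennreal (t i \<omega>) \<partial>M)
        = \<delta> * (\<integral>\<^sup>+\<omega>. ennreal (t i \<omega>) \<partial>M)"
      using nn_integral_deriv_g_xs_mult[of \<Phi> i] by simp
    moreover have "AE \<omega> in M. ennreal (deriv g (xs i \<omega> \<bullet> \<beta>) * t i \<omega>)
        = ennreal (deriv g (xs i \<omega> \<bullet> \<beta>)) * ennreal (t i \<omega>)"
      using t_nonneg by eventually_elim (simp add: ennreal_mult deriv_g_nonneg)
    ultimately show ?thesis
      by (simp cong: nn_integral_cong_AE)
  qed
  note weighted = this
  have "(if gram_inv_trace \<omega> \<le> K then weighted_leverage \<omega> else 0)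
      = (\<Sum>i\<in>UNIV. deriv g (xs i \<omega> \<bullet> \<beta>) * t i \<omega>)" for \<omega>
    by (simp add: t_def weighted_leverage_def)
  moreover have "AE \<omega> in M. \<forall>i\<in>UNIV. 0 \<le> deriv g (xs i \<omega> \<bullet> \<beta>) * t i \<omega>"
    using t_nonneg by eventually_elim (simp add: deriv_g_nonneg)
  ultimately have "(\<integral>\<^sup>+\<omega>. ennreal (if gram_inv_trace \<omega> \<le> K then weighted_leverage \<omega> else 0) \<partial>M)
      = (\<Sum>i\<in>UNIV. \<integral>\<^sup>+\<omega>. ennreal (deriv g (xs i \<omega> \<bullet> \<beta>) * t i \<omega>) \<partial>M)"
    by (simp add: nn_integral_ennreal_sum_AE)
  also have "\<dots> = \<delta> * (\<Sum>i\<in>UNIV. \<integral>\<^sup>+\<omega>. ennreal (t i \<omega>) \<partial>M)"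
    by (simp add: weighted sum_distrib_left)
  also have "(\<Sum>i\<in>UNIV. \<integral>\<^sup>+\<omega>. ennreal (t i \<omega>) \<partial>M) = (\<integral>\<^sup>+\<omega>. ennreal (\<Sum>i\<in>UNIV. t i \<omega>) \<partial>M)"
    using t_nonneg by (simp add: nn_integral_ennreal_sum_AE)
  also have "\<dots> = (\<integral>\<^sup>+\<omega>. ennreal (if gram_inv_trace \<omega> \<le> K then gram_inv_trace \<omega> else 0) \<partial>M)"
    using assms(2) by (intro nn_integral_cong_AE)
      (auto elim!: eventually_mono simp: t_def gram_inv_trace_eq_sum_leverage[OF assms(1)])
  finally show ?thesis .
qed

lemma integral_truncated_gram_inv_trace_le:
  fixes K :: nat
  assumes invertible: "invertible mean_gram" "AE \<omega> in M. invertible (hess \<omega>)"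
    and "integrable M sandwich_trace"
  shows "(\<integral>\<omega>. (if gram_inv_trace \<omega> \<le> K then gram_inv_trace \<omega> else 0) \<partial>M) \<le> \<delta>\<^sup>2 * (\<integral>\<omega>. sandwich_trace \<omega> \<partial>M)"
proof -
  define trunc trunc_weighted where "trunc \<omega> = (if gram_inv_trace \<omega> \<le> K then gram_inv_trace \<omega> else 0)"
    and "trunc_weighted \<omega> = (if gram_inv_trace \<omega> \<le> K then weighted_leverage \<omega> else 0)" for \<omega>
  have [measurable]: "trunc \<in> borel_measurable M" "trunc_weighted \<in> borel_measurable M"
    unfolding trunc_def[abs_def] trunc_weighted_def[abs_def] by measurable
  have trunc_nonneg: "AE \<omega> in M. 0 \<le> trunc \<omega>" and trunc_weighted_nonneg: "AE \<omega> in M. 0 \<le> trunc_weighted \<omega>"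
    using invertible(2) by (eventually_elim,
      simp add: trunc_def trunc_weighted_def gram_inv_trace_eq_sum_leverage weighted_leverage_def
        leverage_nonneg invertible(1) deriv_g_nonneg sum_nonneg)+
  have trunc_integrable: "integrable M trunc"
    using trunc_nonneg
    by (intro integrable_const_bound[where B=K]) (auto simp: trunc_def elim!: eventually_mono)
  have nn_trunc_weighted: "(\<integral>\<^sup>+\<omega>. trunc_weighted \<omega> \<partial>M) = ennreal (\<delta> * (\<integral>\<omega>. trunc \<omega> \<partial>M))"
    using nn_integral_truncated_weighted_leverage[OF invertible, of K] delta_pos
      integral_nonneg_AE[OF trunc_nonneg]
    by (simp add: trunc_weighted_def[symmetric] trunc_def[symmetric] ennreal_mult
        nn_integral_eq_integral[OF trunc_integrable trunc_nonneg])
  then have trunc_weighted_integrable: "integrable M trunc_weighted"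
    using trunc_weighted_nonneg by (intro integrableI_nonneg) auto
  have trunc_weighted_integral: "(\<integral>\<omega>. trunc_weighted \<omega> \<partial>M) = \<delta> * (\<integral>\<omega>. trunc \<omega> \<partial>M)"
    using nn_trunc_weighted delta_pos
      integral_nonneg_AE[OF trunc_weighted_nonneg] integral_nonneg_AE[OF trunc_nonneg]
    by (simp add: nn_integral_eq_integral[OF trunc_weighted_integrable trunc_weighted_nonneg])
  have "AE \<omega> in M. 3 / \<delta>\<^sup>2 * trunc \<omega> \<le> sandwich_trace \<omega> + 2 / \<delta> ^ 3 * trunc_weighted \<omega>"
    using invertible(2)
  proof eventually_elim
    case (elim \<omega>)
    then show ?case
      using gram_inv_trace_tangent_bound[OF invertible(1) elim] sandwich_trace_nonneg[OF invertible(1) elim]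
      by (simp add: trunc_def trunc_weighted_def)
  qed
  then have "(\<integral>\<omega>. 3 / \<delta>\<^sup>2 * trunc \<omega> \<partial>M) \<le> (\<integral>\<omega>. sandwich_trace \<omega> + 2 / \<delta> ^ 3 * trunc_weighted \<omega> \<partial>M)"
    using trunc_integrable trunc_weighted_integrable assms(3) by (intro integral_mono_AE) auto
  then show ?thesis
    using trunc_weighted_integral trunc_weighted_integrable assms(3) delta_pos
    by (simp add: trunc_def[symmetric] field_simps power2_eq_square power3_eq_cube)
qed

lemma card_le_integral_sandwich_trace:
  assumes invertible: "AE \<omega> in M. invertible (hess \<omega>)"
    and "integrable M sandwich_trace"
  shows "real CARD('p) \<le> \<delta>\<^sup>2 * (\<integral>\<omega>. sandwich_trace \<omega> \<partial>M)"
proof -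
  note invertible_mean_gram = invertible_mean_gram[OF invertible]
  have "AE \<omega> in M. 0 \<le> gram_inv_trace \<omega>"
    using invertible by eventually_elim
      (simp add: gram_inv_trace_eq_sum_leverage leverage_nonneg invertible_mean_gram sum_nonneg)
  from integrable_if_truncations_bounded[OF measurable_gram_inv_trace this
      integral_truncated_gram_inv_trace_le[OF invertible_mean_gram invertible assms(2)]]
  have integrable: "integrable M gram_inv_trace"
    and le: "(\<integral>\<omega>. gram_inv_trace \<omega> \<partial>M) \<le> \<delta>\<^sup>2 * (\<integral>\<omega>. sandwich_trace \<omega> \<partial>M)"
    by auto
  have "(\<integral>\<omega>. 2 * real CARD('p) \<partial>M) \<le> (\<integral>\<omega>. gram_inv_trace \<omega> + trace (matrix_inv mean_gram ** gram \<omega>) \<partial>M)"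
    using invertible integrable integrable_trace_mult_gram
    by (intro integral_mono_AE)
      (auto elim!: eventually_mono intro: two_card_le_gram_inv_trace_add_trace[OF invertible_mean_gram])
  then show ?thesis
    using le integrable integrable_trace_mult_gram
    by (simp add: integral_trace_mult_gram matrix_inv_left[OF invertible_mean_gram] trace_I prob_space)
qed

lemma design_matrix_hess:
  "transpose (design_matrix xs \<omega>) ** weight_matrix g \<beta> (design_matrix xs \<omega>) ** design_matrix xs \<omega> = hess \<omega>"
  by (simp add: transpose_mult_weight_matrix_mult hess_def)

lemma design_matrix_gram: "transpose (design_matrix xs \<omega>) ** design_matrix xs \<omega> = gram \<omega>"
  by (simp add: transpose_mult_self gram_def)

lemma H_g_eq: "H_g M g \<beta> xs = \<delta> *\<^sub>R mean_gram"
  by (simp add: H_g_def design_matrix_hess integral_hess)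

lemma v_l_eq:
  assumes "integrable M (\<lambda>\<omega>. matrix_inv (hess \<omega>) ** gram \<omega> ** matrix_inv (hess \<omega>))"
  shows "v_l M g \<beta> xs = \<delta> * (\<integral>\<omega>. sandwich_trace \<omega> \<partial>M)"
  using integral_bounded_linear[OF bounded_linear_trace_mult_right assms, of mean_gram]
  by (simp add: v_l_def design_matrix_hess design_matrix_gram H_g_eq matrix_scaleR_right trace_scaleR
      sandwich_trace_def Let_def)

lemma v_u_eq:
  assumes "invertible mean_gram"
  shows "v_u M g \<beta> xs = (real CARD('n) - 1) / real CARD('n) * (real CARD('p) / \<delta>)"
  using assms delta_pos
  by (simp add: v_u_def design_matrix_gram H_g_eq matrix_inv_scaleR matrix_scaleR_left trace_scaleR
      matrix_inv_left trace_I mean_gram_def[symmetric] divide_inverse)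

end

theorem proposition1:
  fixes M :: "'a measure"
    and x :: "'a \<Rightarrow> real^'p"
    and xs :: "'n::finite \<Rightarrow> 'a \<Rightarrow> real^'p"
    and g :: "real \<Rightarrow> real"
    and \<beta> :: "real^'p"
    and \<delta> :: real
  assumes "prob_space M"
    and "CARD('p) < CARD('n)"
    \<comment> \<open>x is a random vector; x_1..x_n are i.i.d. copies of x\<close>
    and "x \<in> borel_measurable M"
    and "prob_space.indep_vars M (\<lambda>_. borel) xs UNIV"
    and "\<And>i. distr M borel (xs i) = distr M borel x"
    \<comment> \<open>E[x] = 0 (with finite second moments, so that E[X^T X] exists)\<close>
    and "integrable M x" and "integral\<^sup>L M x = 0"
    and "integrable M (\<lambda>\<omega>. outer_prod (x \<omega>))"
    \<comment> \<open>link function\<close>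
    and "mono g" and "\<And>t. g differentiable (at t)"
    \<comment> \<open>(X^T D X)^{-1} exists with probability 1\<close>
    and "AE \<omega> in M. invertible (transpose (design_matrix xs \<omega>) **
                 weight_matrix g \<beta> (design_matrix xs \<omega>) ** design_matrix xs \<omega>)"
    \<comment> \<open>v_l < \<infinity>\<close>
    and "integrable M (\<lambda>\<omega>. let X = design_matrix xs \<omega>;
                 A = transpose X ** weight_matrix g \<beta> X ** X in
               matrix_inv A ** (transpose X ** X) ** matrix_inv A)"
    \<comment> \<open>E[g'(x^T \<beta>) | x x^T] = \<delta>\<close>
    and "\<delta> > 0"
    and "AE \<omega> in M. real_cond_exp M (vimage_algebra (space M) (\<lambda>\<omega>. outer_prod (x \<omega>)) borel)
                 (\<lambda>\<omega>. deriv g (x \<omega> \<bullet> \<beta>)) \<omega> = \<delta>"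
  shows "v_l M g \<beta> xs > v_u M g \<beta> xs"
proof -
  interpret glm_design M x xs g \<beta> \<delta>
    using assms by (intro glm_design.intro glm_design_axioms.intro) auto
  have invertible: "AE \<omega> in M. invertible (hess \<omega>)"
    using assms(11) by (simp add: design_matrix_hess)
  have integrable: "integrable M (\<lambda>\<omega>. matrix_inv (hess \<omega>) ** gram \<omega> ** matrix_inv (hess \<omega>))"
    using assms(12) by (simp add: Let_def design_matrix_hess design_matrix_gram)
  have "integrable M sandwich_trace"
    using integrable_bounded_linear[OF bounded_linear_trace_mult_right integrable, of mean_gram]
    by (simp add: sandwich_trace_def[abs_def])
  then have "real CARD('p) / \<delta> \<le> v_l M g \<beta> xs"
    using card_le_integral_sandwich_trace[OF invertible] v_l_eq[OF integrable] delta_pos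
    by (simp add: field_simps power2_eq_square)
  moreover have "v_u M g \<beta> xs < real CARD('p) / \<delta>"
    using mult_strict_right_mono[of "(real CARD('n) - 1) / real CARD('n)" 1 "real CARD('p) / \<delta>"] delta_pos
    by (simp add: v_u_eq[OF invertible_mean_gram[OF invertible]])
  ultimately show ?thesis
    by linarith
qed

end
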